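(* Let $\mathcal A=(Q,\Sigma,\delta,\rho)$ be a connected bireversible Mealy automaton whose labeled orbit tree $\mathfrak t(\mathcal A)$ has no active self-liftable branch, and let $\mathfrak j$ be a jungle tree of $\mathfrak t(\mathcal A)$. Then all equivalence classes of the relation $\sim$ on the stems of $\mathfrak j$ have the same cardinality.
   Context: Mealy automata. A Mealy automaton is $\mathcal A=(Q,\Sigma,\delta,\rho)$ with $Q,\Sigma$ finite non-empty sets, $\delta=(\delta_i\colon Q\to Q)_{i\in\Sigma}$, $\rho=(\rho_x\colon\Sigma\to\Sigma)_{x\in Q}$; transitions $x\xrightarrow{i\mid\rho_x(i)}\delta_i(x)$. Invertible: each $\rho_x$ a permutation of $\Sigma$; reversible: each $\delta_i$ a permutation of $Q$; bireversible: invertible, reversible, and for each $j\in\Sigma$ the map $x\mapsto\delta_{\rho_x^{-1}(j)}(x)$ is a permutation of $Q$. Connected: the directed graph on $Q$ with edges $x\to\delta_i(x)$ is connected. Extensions: $\rho_x(i\mathbf s)=\rho_x(i)\rho_{\delta_i(x)}(\mathbf s)$ on $\Sigma^*$; $\rho_{x_1\cdots x_m}=\rho_{x_m}\circ\cdots\circ\rho_{x_1}$; dually $\delta_i(x\mathbf u)=\delta_i(x)\delta_{\rho_x(i)}(\mathbf u)$ on $Q^*$, $\delta_{i_1\cdots i_m}=\delta_{i_m}\circ\cdots\circ\delta_{i_1}$. The connected components of $\mathcal A^n$ (stateset $Q^n$, transitions $\mathbf u\xrightarrow{i\mid\rho_{\mathbf u}(i)}\delta_i(\mathbf u)$) are,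 for reversible $\mathcal A$, the orbits of $Q^n$ under the maps $\delta_{\mathbf s}$. Orbit tree $\mathfrak t(\mathcal A)$: vertices at level $n\ge0$ are the connected components of $\mathcal A^n$; an edge from the component of $\mathbf u\in Q^n$ to that of $\mathbf ux$ for all $\mathbf u,x$; edge $C\to D$ labeled $\#D/\#C$. $\top,\bot$ = first/last vertex of a downward path; level of an edge/path = level of its top vertex. A word of $Q^*\cup Q^\omega$ represents the initial path through the components of its prefixes. Edge $e$ is liftable to $f$ if every word of $\bot(e)$ has a suffix in $\bot(f)$; paths are liftable if corresponding edges are. $f$ is a legitimate child of $e$ if $\top(f)=\bot(e)$ and $f$ is liftable to $e$. A path/subtree $\mathfrak s$ is $k$-self-liftable if for all $i\ge0$ every path in $\mathfrak s$ starting at level $i+k$ is liftable to a path in $\mathfrak s$ starting at level $i$; self-liftable if $k$-self-liftable for some $k>0$. A branch (infinite initial path) is active if its labels are not eventually all $1$. Jungle trees: for a finite 1-self-liftable initial path $\mathbf e$ of length $n$ whose last edge has at least two legitimate children, all labeled $1$, $\mathfrak j(\mathbf e)$ consists of $\mathbf e$ plus all edges descending from $\bot(\mathbf e)$ that are liftable to the last edge of $\mathbf e$. Stems: the words of $\bot(\mathbf e)\subseteq Q^n$. A $\mathfrak j$-word is a word representing an initial path of $\mathfrak j$. For stems $\mathbf u,\mathbf v$: $\mathbf u\sim\mathbf v$ iff there is $\mathbf s\in Q^*$ such that $\mathbf{usv}$ is a $\mathfrak j$-word and $\rho_{\mathbf{us}}$ is the identity of $\Sigma^*$ ($\sim$ is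 an equivalence relation). *)

theory Defs
  imports Complex_Main "HOL-Library.Sublist"
begin

text \<open>A Mealy automaton with state type 'q and alphabet type 's (both finite, nonempty
  since HOL types are nonempty).  d i x = delta_i(x), r x i = rho_x(i).\<close>

type_synonym ('q,'s) dlt = "'s \<Rightarrow> 'q \<Rightarrow> 'q"
type_synonym ('q,'s) rh = "'q \<Rightarrow> 's \<Rightarrow> 's"
type_synonym 'q vertex = "'q list set"
type_synonym 'q edge = "'q vertex \<times> 'q vertex"

definition invertible :: "('q,'s) rh \<Rightarrow> bool" where
  "invertible r \<longleftrightarrow> (\<forall>x. bij (r x))"

definition reversible :: "('q,'s) dlt \<Rightarrow> bool" where
  "reversible d \<longleftrightarrow> (\<forall>i. bij (d i))"

definition bireversible :: "('q,'s) dlt \<Rightarrow> ('q,'s) rh \<Rightarrow> bool" where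
  "bireversible d r \<longleftrightarrow> invertible r \<and> reversible d \<and>
     (\<forall>j. bij (\<lambda>x. d (inv (r x) j) x))"

definition state_graph :: "('q,'s) dlt \<Rightarrow> ('q \<times> 'q) set" where
  "state_graph d = {(x, d i x) | x i. True}"

definition connected_aut :: "('q,'s) dlt \<Rightarrow> bool" where
  "connected_aut d \<longleftrightarrow> (\<forall>x y. (x, y) \<in> (state_graph d \<union> (state_graph d)\<inverse>)\<^sup>*)"

fun rhoS :: "('q,'s) dlt \<Rightarrow> ('q,'s) rh \<Rightarrow> 'q \<Rightarrow> 's list \<Rightarrow> 's list" where
  "rhoS d r x [] = []"
| "rhoS d r x (i # s) = r x i # rhoS d r (d i x) s"

text \<open>rho_{x1...xm} = rho_{xm} o ... o rho_{x1}.\<close>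
fun rhoQS :: "('q,'s) dlt \<Rightarrow> ('q,'s) rh \<Rightarrow> 'q list \<Rightarrow> 's list \<Rightarrow> 's list" where
  "rhoQS d r [] s = s"
| "rhoQS d r (x # u) s = rhoQS d r u (rhoS d r x s)"

fun deltaQ :: "('q,'s) dlt \<Rightarrow> ('q,'s) rh \<Rightarrow> 's \<Rightarrow> 'q list \<Rightarrow> 'q list" where
  "deltaQ d r i [] = []"
| "deltaQ d r i (x # u) = d i x # deltaQ d r (r x i) u"

text \<open>Transitions of the power automaton A^n (on all of Q^*, length is preserved).\<close>
definition pstep :: "('q,'s) dlt \<Rightarrow> ('q,'s) rh \<Rightarrow> ('q list \<times> 'q list) set" where
  "pstep d r = {(u, deltaQ d r i u) | u i. True}"

text \<open>Connected component of u in A^(length u).\<close>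
definition comp :: "('q,'s) dlt \<Rightarrow> ('q,'s) rh \<Rightarrow> 'q list \<Rightarrow> 'q vertex" where
  "comp d r u = {v. (u, v) \<in> (pstep d r \<union> (pstep d r)\<inverse>)\<^sup>*}"

definition vlevel :: "'q vertex \<Rightarrow> nat" where
  "vlevel C = length (SOME u. u \<in> C)"

definition is_edge :: "('q,'s) dlt \<Rightarrow> ('q,'s) rh \<Rightarrow> 'q edge \<Rightarrow> bool" where
  "is_edge d r e \<longleftrightarrow> (\<exists>u x. fst e = comp d r u \<and> snd e = comp d r (u @ [x]))"

definition label :: "'q edge \<Rightarrow> rat" where
  "label e = of_nat (card (snd e)) / of_nat (card (fst e))"

definition is_path :: "('q,'s) dlt \<Rightarrow> ('q,'s) rh \<Rightarrow> 'q edge list \<Rightarrow> bool" where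
  "is_path d r p \<longleftrightarrow> (\<forall>e\<in>set p. is_edge d r e) \<and>
     (\<forall>j. Suc j < length p \<longrightarrow> snd (p ! j) = fst (p ! Suc j))"

definition initial_path :: "('q,'s) dlt \<Rightarrow> ('q,'s) rh \<Rightarrow> 'q edge list \<Rightarrow> bool" where
  "initial_path d r p \<longleftrightarrow> is_path d r p \<and> p \<noteq> [] \<and> fst (hd p) = comp d r []"

definition is_branch :: "('q,'s) dlt \<Rightarrow> ('q,'s) rh \<Rightarrow> (nat \<Rightarrow> 'q edge) \<Rightarrow> bool" where
  "is_branch d r b \<longleftrightarrow> fst (b 0) = comp d r [] \<and>
     (\<forall>j. is_edge d r (b j) \<and> snd (b j) = fst (b (Suc j)))"

definition active :: "(nat \<Rightarrow> 'q edge) \<Rightarrow> bool" where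
  "active b \<longleftrightarrow> \<not> (\<exists>N. \<forall>j\<ge>N. label (b j) = 1)"

definition liftable :: "'q edge \<Rightarrow> 'q edge \<Rightarrow> bool" where
  "liftable e f \<longleftrightarrow> (\<forall>u\<in>snd e. \<exists>v\<in>snd f. suffix v u)"

definition path_liftable :: "'q edge list \<Rightarrow> 'q edge list \<Rightarrow> bool" where
  "path_liftable p q \<longleftrightarrow> list_all2 liftable p q"

text \<open>A path/subtree is given by its set of edges S.\<close>
definition self_liftable_k :: "('q,'s) dlt \<Rightarrow> ('q,'s) rh \<Rightarrow> 'q edge set \<Rightarrow> nat \<Rightarrow> bool" where
  "self_liftable_k d r S k \<longleftrightarrow>
     (\<forall>i p. is_path d r p \<and> p \<noteq> [] \<and> set p \<subseteq> S \<and> vlevel (fst (hd p)) = i + k \<longrightarrow>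
        (\<exists>q. is_path d r q \<and> q \<noteq> [] \<and> set q \<subseteq> S \<and> vlevel (fst (hd q)) = i \<and>
             path_liftable p q))"

definition self_liftable :: "('q,'s) dlt \<Rightarrow> ('q,'s) rh \<Rightarrow> 'q edge set \<Rightarrow> bool" where
  "self_liftable d r S \<longleftrightarrow> (\<exists>k>0. self_liftable_k d r S k)"

definition legit_child :: "('q,'s) dlt \<Rightarrow> ('q,'s) rh \<Rightarrow> 'q edge \<Rightarrow> 'q edge \<Rightarrow> bool" where
  "legit_child d r e f \<longleftrightarrow> is_edge d r f \<and> fst f = snd e \<and> liftable f e"

text \<open>Conditions on a finite initial path e for the jungle tree j(e) to be defined.\<close>
definition jungle_root :: "('q,'s) dlt \<Rightarrow> ('q,'s) rh \<Rightarrow> 'q edge list \<Rightarrow> bool" where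
  "jungle_root d r e \<longleftrightarrow> initial_path d r e \<and> self_liftable_k d r (set e) 1 \<and>
     (\<exists>f1 f2. f1 \<noteq> f2 \<and> legit_child d r (last e) f1 \<and> legit_child d r (last e) f2) \<and>
     (\<forall>f. legit_child d r (last e) f \<longrightarrow> label f = 1)"

definition descends :: "'q edge \<Rightarrow> 'q vertex \<Rightarrow> bool" where
  "descends f C \<longleftrightarrow> (\<exists>u\<in>C. \<exists>v. u @ v \<in> fst f)"

definition jungle :: "('q,'s) dlt \<Rightarrow> ('q,'s) rh \<Rightarrow> 'q edge list \<Rightarrow> 'q edge set" where
  "jungle d r e = set e \<union>
     {f. is_edge d r f \<and> descends f (snd (last e)) \<and> liftable f (last e)}"

definition stems :: "'q edge list \<Rightarrow> 'q list set" where
  "stems e = snd (last e)"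

text \<open>A finite word represents the initial path through the components of its prefixes.\<close>
definition jword :: "('q,'s) dlt \<Rightarrow> ('q,'s) rh \<Rightarrow> 'q edge list \<Rightarrow> 'q list \<Rightarrow> bool" where
  "jword d r e w \<longleftrightarrow>
     (\<forall>j<length w. (comp d r (take j w), comp d r (take (Suc j) w)) \<in> jungle d r e)"

definition stem_sim :: "('q,'s) dlt \<Rightarrow> ('q,'s) rh \<Rightarrow> 'q edge list \<Rightarrow> 'q list \<Rightarrow> 'q list \<Rightarrow> bool" where
  "stem_sim d r e u v \<longleftrightarrow>
     (\<exists>s. jword d r e (u @ s @ v) \<and> (\<forall>t. rhoQS d r (u @ s) t = t))"

end

theory Submission
  imports Defs
begin

text \<open>Each \<open>\<delta>\<^sub>i\<close> maps the set of stems into itself and preserves \<open>\<sim>\<close>: if \<open>usv\<close> is a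
  \<open>\<mathfrak>j\<close>-word with \<open>\<rho>\<^bsub>us\<^esub> = id\<close>, then \<open>\<rho>\<^bsub>us\<^esub>(i) = i\<close>, so \<open>\<delta>\<^sub>i(usv) = \<delta>\<^sub>i(u) s' \<delta>\<^sub>i(v)\<close>; this is again a
  \<open>\<mathfrak>j\<close>-word since \<open>\<delta>\<^sub>i\<close> fixes every component, and \<open>\<rho>\<^bsub>\<delta>\<^sub>i(us)\<^esub> = id\<close> is read off from
  \<open>\<rho>\<^bsub>us\<^esub>(it) = it\<close>. As \<open>\<delta>\<^sub>i\<close> is injective, the size \<open>f(u)\<close> of the class of \<open>u\<close> satisfies
  \<open>f(u) \<le> f(\<delta>\<^sub>i u)\<close>; since \<open>\<delta>\<^sub>i\<close> permutes the finite set of stems, summing over it forces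
  equality. The stems form one orbit of the maps \<open>\<delta>\<^sub>i\<close>, so \<open>f\<close> is constant.\<close>

fun rho_letter :: "('q,'s) dlt \<Rightarrow> ('q,'s) rh \<Rightarrow> 'q list \<Rightarrow> 's \<Rightarrow> 's" where
  "rho_letter d r [] i = i"
| "rho_letter d r (x # u) i = rho_letter d r u (r x i)"

lemma deltaQ_append:
  "deltaQ d r i (u @ v) = deltaQ d r i u @ deltaQ d r (rho_letter d r u i) v"
  by (induct u arbitrary: i) auto

lemma rhoQS_Cons: "rhoQS d r u (i # t) = rho_letter d r u i # rhoQS d r (deltaQ d r i u) t"
  by (induct u arbitrary: i t) auto

lemma length_deltaQ [simp]: "length (deltaQ d r i u) = length u"
  by (induct u arbitrary: i) auto

lemma take_deltaQ: "take j (deltaQ d r i u) = deltaQ d r i (take j u)"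
  by (induct u arbitrary: i j) (auto simp: take_Cons' split: nat.splits)

lemma inj_deltaQ:
  assumes "reversible d"
  shows "inj (deltaQ d r i)"
proof (rule injI)
  have inj_d: "inj (d j)" for j
    using assms by (simp add: reversible_def bij_is_inj)
  show "deltaQ d r i u = deltaQ d r i v \<Longrightarrow> u = v" for u v
  proof (induct u arbitrary: v i)
    case Nil then show ?case by (cases v) auto
  next
    case (Cons x u)
    then show ?case using inj_d by (cases v) (auto simp: inj_eq)
  qed
qed

lemma comp_self: "u \<in> comp d r u"
  by (simp add: comp_def)

lemma comp_eq_if_mem:
  assumes "v \<in> comp d r u"
  shows "comp d r v = comp d r u"
proof -
  let ?R = "(pstep d r \<union> (pstep d r)\<inverse>)\<^sup>*"
  have "sym ?R" by (intro sym_rtrancl sym_Un_converse)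
  moreover have "(u, v) \<in> ?R" using assms by (simp add: comp_def)
  ultimately show ?thesis
    unfolding comp_def by (blast dest: symD intro: rtrancl_trans)
qed

lemma length_comp:
  assumes "v \<in> comp d r u"
  shows "length v = length u"
proof -
  have "(u, v) \<in> (pstep d r \<union> (pstep d r)\<inverse>)\<^sup>*" using assms by (simp add: comp_def)
  then show ?thesis
    by (induct rule: rtrancl_induct) (auto simp: pstep_def)
qed

lemma finite_comp: "finite (comp d r (u :: 'q::finite list))"
proof (rule finite_subset)
  show "comp d r u \<subseteq> {v. set v \<subseteq> UNIV \<and> length v = length u}"
    using length_comp by blast
qed (rule finite_lists_length_eq, simp)

lemma deltaQ_in_comp: "deltaQ d r i u \<in> comp d r u"
proof -
  have "(u, deltaQ d r i u) \<in> pstep d r" by (auto simp: pstep_def)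
  then show ?thesis unfolding comp_def by blast
qed

lemma comp_deltaQ: "comp d r (deltaQ d r i u) = comp d r u"
  by (rule comp_eq_if_mem[OF deltaQ_in_comp])

lemma comp_constant:
  assumes invariant: "\<And>u i. u \<in> comp d r a \<Longrightarrow> f (deltaQ d r i u) = f u"
    and "v \<in> comp d r a"
  shows "f v = f a"
proof -
  have "(a, v) \<in> (pstep d r \<union> (pstep d r)\<inverse>)\<^sup>*" using assms(2) by (simp add: comp_def)
  then show ?thesis
  proof (induct rule: rtrancl_induct)
    case base then show ?case by simp
  next
    case (step y z)
    have "y \<in> comp d r a" using step(1) by (simp add: comp_def)
    from step(2) show ?case
    proof
      assume "(y, z) \<in> pstep d r"
      then obtain i where "z = deltaQ d r i y" by (auto simp: pstep_def)
      then show ?thesis using invariant[OF \<open>y \<in> comp d r a\<close>] step(3) by simp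
    next
      assume "(y, z) \<in> (pstep d r)\<inverse>"
      then obtain i where y: "y = deltaQ d r i z" by (auto simp: pstep_def)
      have "comp d r z = comp d r y" using y by (simp add: comp_deltaQ)
      also have "\<dots> = comp d r a" using \<open>y \<in> comp d r a\<close> by (rule comp_eq_if_mem)
      finally have "z \<in> comp d r a" using comp_self by metis
      with invariant y step(3) show ?thesis by simp
    qed
  qed
qed

lemma jword_deltaQ: "jword d r e (deltaQ d r i w) = jword d r e w"
  unfolding jword_def by (simp add: take_deltaQ comp_deltaQ)

lemma stem_sim_deltaQ:
  assumes "stem_sim d r e u v"
  shows "stem_sim d r e (deltaQ d r i u) (deltaQ d r i v)"
proof -
  obtain s where jw: "jword d r e (u @ s @ v)" and id: "\<And>t. rhoQS d r (u @ s) t = t"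
    using assms unfolding stem_sim_def by blast
  have fix_i: "rho_letter d r (u @ s) i = i"
    using id[of "[i]"] by (simp add: rhoQS_Cons)
  have id': "rhoQS d r (deltaQ d r i (u @ s)) t = t" for t
    using id[of "i # t"] by (simp add: rhoQS_Cons fix_i)
  let ?s = "deltaQ d r (rho_letter d r u i) s"
  have "deltaQ d r i (u @ s @ v) = deltaQ d r i u @ ?s @ deltaQ d r i v"
    using deltaQ_append[of d r i "u @ s" v] fix_i by (simp add: deltaQ_append)
  then have "jword d r e (deltaQ d r i u @ ?s @ deltaQ d r i v)"
    using jw jword_deltaQ by metis
  moreover have "rhoQS d r (deltaQ d r i u @ ?s) t = t" for t
    using id' by (simp add: deltaQ_append)
  ultimately show ?thesis unfolding stem_sim_def by blast
qed

lemma eq_if_mono_under_inj_endo: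
  fixes f :: "'a \<Rightarrow> 'b::ordered_cancel_comm_monoid_add"
  assumes "finite A" and "inj_on g A" and "g ` A \<subseteq> A"
    and mono: "\<And>x. x \<in> A \<Longrightarrow> f x \<le> f (g x)"
    and "x \<in> A"
  shows "f (g x) = f x"
proof (rule ccontr)
  assume "f (g x) \<noteq> f x"
  with mono[OF \<open>x \<in> A\<close>] have "f x < f (g x)" by simp
  with mono \<open>x \<in> A\<close> have "sum f A < sum (f \<circ> g) A"
    by (intro sum_strict_mono_ex1[OF \<open>finite A\<close>]) auto
  also have "sum (f \<circ> g) A = sum f (g ` A)"
    using \<open>inj_on g A\<close> by (simp add: sum.reindex)
  also have "g ` A = A"
    using assms(1,3,2) by (rule endo_inj_surj)
  finally show False by simp
qed

lemma card_sim_class_le_deltaQ: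
  assumes "reversible d" and "finite C" and "\<And>w. w \<in> C \<Longrightarrow> deltaQ d r i w \<in> C"
  shows "card {w\<in>C. stem_sim d r e u w} \<le> card {w\<in>C. stem_sim d r e (deltaQ d r i u) w}"
proof (rule card_inj_on_le)
  show "inj_on (deltaQ d r i) {w\<in>C. stem_sim d r e u w}"
    using inj_deltaQ[OF assms(1)] by (rule inj_on_subset) simp
  show "deltaQ d r i ` {w\<in>C. stem_sim d r e u w} \<subseteq> {w\<in>C. stem_sim d r e (deltaQ d r i u) w}"
    by (rule image_subsetI) (simp add: assms(3) stem_sim_deltaQ)
  show "finite {w\<in>C. stem_sim d r e (deltaQ d r i u) w}"
    using assms(2) by simp
qed

lemma stems_eq_comp:
  assumes "jungle_root d r e"
  obtains a where "stems e = comp d r a"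
proof -
  have "e \<noteq> []" "is_path d r e"
    using assms by (auto simp: jungle_root_def initial_path_def)
  then have "is_edge d r (last e)" by (auto simp: is_path_def)
  then show ?thesis using that by (auto simp: is_edge_def stems_def)
qed

theorem proposition5p11:
  fixes d :: "'s::finite \<Rightarrow> 'q::finite \<Rightarrow> 'q" and r :: "'q \<Rightarrow> 's \<Rightarrow> 's"
    and e :: "'q edge list"
  assumes "connected_aut d"
    and "bireversible d r"
    and "\<forall>b. is_branch d r b \<and> self_liftable d r (range b) \<longrightarrow> \<not> active b"
    and "jungle_root d r e"
  shows "\<forall>u\<in>stems e. \<forall>v\<in>stems e.
           card {w\<in>stems e. stem_sim d r e u w} = card {w\<in>stems e. stem_sim d r e v w}"
proof -
  obtain a where C: "stems e = comp d r a" using stems_eq_comp[OF assms(4)] .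
  define f where "f u = card {w\<in>stems e. stem_sim d r e u w}" for u
  have rev: "reversible d" using assms(2) by (simp add: bireversible_def)
  have closed: "w \<in> stems e \<Longrightarrow> deltaQ d r i w \<in> stems e" for w i
    unfolding C by (metis comp_eq_if_mem deltaQ_in_comp)
  have "f (deltaQ d r i u) = f u" if "u \<in> stems e" for u i
  proof (rule eq_if_mono_under_inj_endo[where A = "stems e"])
    show "finite (stems e)" unfolding C by (rule finite_comp)
    show "inj_on (deltaQ d r i) (stems e)" using inj_deltaQ[OF rev] by (rule inj_on_subset) simp
    show "f x \<le> f (deltaQ d r i x)" for x
      unfolding f_def using rev \<open>finite (stems e)\<close> closed by (rule card_sim_class_le_deltaQ)
  qed (use closed that in auto)
  then have "v \<in> stems e \<Longrightarrow> f v = f a" for v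
    unfolding C by (rule comp_constant)
  then show ?thesis by (simp add: f_def)
qed

end
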